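(* In the cell FDE setting described in the context, assume (H1), (H2), (H3) and $q(0)>0$. Let $\phi=(\varphi,\psi)\in X_+$ with $\varphi(0)>0$ and let $(w,v)=(w^\phi,v^\phi)$. If $v(t)\to0$ as $t\to\infty$, then $w(t)\to\infty$ as $t\to\infty$. In particular, $(w(t),v(t))$ does not converge to $(0,0)$ as $t\to\infty$.
   Context: Let $h>0$, $R_-<0$, $I:=(R_-,\infty)$. $\|\phi\|_0:=\max_{\theta\in[-h,0]}|\phi(\theta)|$, $\|\phi\|_1:=\|\phi\|_0+\|\phi'\|_0$; $x_t(s):=x(t+s)$, $s\in[-h,0]$. Let $U:=C^1([-h,0],\mathbb R)\times C^1([-h,0],I)$, $U_+:=C^1([-h,0],[0,\infty)^2)$, $q:I\to\mathbb R$, $j:U\to\mathbb R$, $\mu\ge0$. Cell FDE: $w'(t)=q(v(t))w(t)$, $v'(t)=j(w_t,v_t)-\mu v(t)$, $t>0$, $(w_0,v_0)=(\varphi,\psi)$. $F(\varphi,\psi):=(q(\psi(0))\varphi(0),j(\varphi,\psi)-\mu\psi(0))$, $X:=\{\phi\in U:\phi'(0)=F(\phi)\}$, $X_+:=X\cap U_+$. Solutions are $C^1$ maps $x=(w,v)$ on $[-h,t_* )$ with $x_0=\phi$, $x_t\in U$, satisfying the equations on $(0,t_* )$. (S): $f$ is $C^1$, each $Df(\phi)$ extends to a linear map on $C([-h,0],\mathbb R^n)$ and $(\phi,\chi)\mapsto D_ef(\phi)\chi$ is continuous. (sLb) on $\mathcal O_+$: for each $\|\cdot\|_1$-bounded $B\subset\mathcal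 O_+$ there is $L_B$ with $|f(\phi)-f(\chi)|\le L_B\|\phi-\chi\|_0$ on $B$. (H1): $j$ satisfies (S) on $U$, (sLb) on $U_+$, $j\ge0$ on $U_+$, and $j(B_1\times B_2)$ is bounded whenever $B_1\times B_2\subset U_+$ with $B_1$ bounded. (H2): $q$ bounded and $C^1$. (H3): $X_+\neq\emptyset$. Under (H1)-(H3) each $\phi\in X_+$ has a unique solution on $[-h,\infty)$ with segments in $X_+$. *)

theory Defs
  imports "HOL-Analysis.Analysis"
begin

text \<open>Functions on [-h,0] are represented as total functions that vanish outside
  [-h,0]. Pairs (w,v) are represented as functions into real \<times> real (Euclidean norm).\<close>

definition ext0 :: "real \<Rightarrow> (real \<Rightarrow> 'a::zero) \<Rightarrow> bool" where
  "ext0 h \<phi> \<longleftrightarrow> (\<forall>\<theta>. \<theta> \<notin> {-h..0} \<longrightarrow> \<phi> \<theta> = 0)"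

definition C1 :: "real \<Rightarrow> (real \<Rightarrow> 'a::real_normed_vector) \<Rightarrow> bool" where
  "C1 h \<phi> \<longleftrightarrow> (\<exists>\<phi>'. (\<forall>\<theta>\<in>{-h..0}. (\<phi> has_vector_derivative \<phi>' \<theta>) (at \<theta> within {-h..0}))
                    \<and> continuous_on {-h..0} \<phi>')"

definition dseg :: "real \<Rightarrow> (real \<Rightarrow> 'a::real_normed_vector) \<Rightarrow> real \<Rightarrow> 'a" where
  "dseg h \<phi> \<theta> = vector_derivative \<phi> (at \<theta> within {-h..0})"

definition nrm0 :: "real \<Rightarrow> (real \<Rightarrow> 'a::real_normed_vector) \<Rightarrow> real" where
  "nrm0 h \<phi> = (SUP \<theta>\<in>{-h..0}. norm (\<phi> \<theta>))"

definition nrm1 :: "real \<Rightarrow> (real \<Rightarrow> 'a::real_normed_vector) \<Rightarrow> real" where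
  "nrm1 h \<phi> = nrm0 h \<phi> + nrm0 h (dseg h \<phi>)"

definition E1 :: "real \<Rightarrow> (real \<Rightarrow> real \<times> real) set" where
  "E1 h = {\<phi>. C1 h \<phi> \<and> ext0 h \<phi>}"

definition E0 :: "real \<Rightarrow> (real \<Rightarrow> real \<times> real) set" where
  "E0 h = {\<phi>. continuous_on {-h..0} \<phi> \<and> ext0 h \<phi>}"

definition Uset :: "real \<Rightarrow> real \<Rightarrow> (real \<Rightarrow> real \<times> real) set" where
  "Uset h Rm = {\<phi>\<in>E1 h. \<forall>\<theta>\<in>{-h..0}. snd (\<phi> \<theta>) > Rm}"

definition Uplus :: "real \<Rightarrow> (real \<Rightarrow> real \<times> real) set" where
  "Uplus h = {\<phi>\<in>E1 h. \<forall>\<theta>\<in>{-h..0}. fst (\<phi> \<theta>) \<ge> 0 \<and> snd (\<phi> \<theta>) \<ge> 0}"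

definition pairf :: "(real \<Rightarrow> real) \<Rightarrow> (real \<Rightarrow> real) \<Rightarrow> real \<Rightarrow> real \<times> real" where
  "pairf a b = (\<lambda>\<theta>. (a \<theta>, b \<theta>))"

definition lin_on :: "(real \<Rightarrow> real \<times> real) set \<Rightarrow> ((real \<Rightarrow> real \<times> real) \<Rightarrow> real) \<Rightarrow> bool" where
  "lin_on E L \<longleftrightarrow> (\<forall>\<zeta>1\<in>E. \<forall>\<zeta>2\<in>E. L (\<lambda>\<theta>. \<zeta>1 \<theta> + \<zeta>2 \<theta>) = L \<zeta>1 + L \<zeta>2)
                 \<and> (\<forall>c::real. \<forall>\<zeta>\<in>E. L (\<lambda>\<theta>. c *\<^sub>R \<zeta> \<theta>) = c * L \<zeta>)"

text \<open>Condition (S) for a real-valued f on an open set Ob of C^1([-h,0],R^2):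
  f is C^1 (Frechet, w.r.t. the norm nrm1), each derivative Df(phi) extends to a linear
  map D_e f(phi) on C([-h,0],R^2), and (phi,chi) \<mapsto> D_e f(phi) chi is continuous on
  Ob \<times> C([-h,0],R^2).\<close>
definition condS :: "real \<Rightarrow> (real \<Rightarrow> real \<times> real) set \<Rightarrow> ((real \<Rightarrow> real \<times> real) \<Rightarrow> real) \<Rightarrow> bool" where
  "condS h Ob f \<longleftrightarrow> (\<exists>Df De.
     (\<forall>\<phi>\<in>Ob. lin_on (E1 h) (Df \<phi>) \<and> (\<exists>K. \<forall>\<zeta>\<in>E1 h. \<bar>Df \<phi> \<zeta>\<bar> \<le> K * nrm1 h \<zeta>))
   \<and> (\<forall>\<phi>\<in>Ob. \<forall>\<epsilon>>0. \<exists>\<delta>>0. \<forall>\<zeta>\<in>E1 h. nrm1 h \<zeta> < \<delta> \<and> (\<lambda>\<theta>. \<phi> \<theta> + \<zeta> \<theta>) \<in> Ob \<longrightarrow>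
        \<bar>f (\<lambda>\<theta>. \<phi> \<theta> + \<zeta> \<theta>) - f \<phi> - Df \<phi> \<zeta>\<bar> \<le> \<epsilon> * nrm1 h \<zeta>)
   \<and> (\<forall>\<phi>\<in>Ob. \<forall>\<epsilon>>0. \<exists>\<delta>>0. \<forall>\<psi>\<in>Ob. nrm1 h (\<lambda>\<theta>. \<psi> \<theta> - \<phi> \<theta>) < \<delta> \<longrightarrow>
        (\<forall>\<zeta>\<in>E1 h. \<bar>Df \<psi> \<zeta> - Df \<phi> \<zeta>\<bar> \<le> \<epsilon> * nrm1 h \<zeta>))
   \<and> (\<forall>\<phi>\<in>Ob. lin_on (E0 h) (De \<phi>) \<and> (\<forall>\<zeta>\<in>E1 h. De \<phi> \<zeta> = Df \<phi> \<zeta>))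
   \<and> (\<forall>\<phi>\<in>Ob. \<forall>\<zeta>\<in>E0 h. \<forall>\<epsilon>>0. \<exists>\<delta>>0. \<forall>\<psi>\<in>Ob. \<forall>\<xi>\<in>E0 h.
        nrm1 h (\<lambda>\<theta>. \<psi> \<theta> - \<phi> \<theta>) < \<delta> \<and> nrm0 h (\<lambda>\<theta>. \<xi> \<theta> - \<zeta> \<theta>) < \<delta> \<longrightarrow>
        \<bar>De \<psi> \<xi> - De \<phi> \<zeta>\<bar> < \<epsilon>))"

definition sLb :: "real \<Rightarrow> (real \<Rightarrow> real \<times> real) set \<Rightarrow> ((real \<Rightarrow> real \<times> real) \<Rightarrow> real) \<Rightarrow> bool" where
  "sLb h Ob f \<longleftrightarrow> (\<forall>B\<subseteq>Ob. (\<exists>M. \<forall>\<phi>\<in>B. nrm1 h \<phi> \<le> M) \<longrightarrow>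
      (\<exists>L. \<forall>\<phi>\<in>B. \<forall>\<zeta>\<in>B. \<bar>f \<phi> - f \<zeta>\<bar> \<le> L * nrm0 h (\<lambda>\<theta>. \<phi> \<theta> - \<zeta> \<theta>)))"

definition H1 :: "real \<Rightarrow> real \<Rightarrow> ((real \<Rightarrow> real \<times> real) \<Rightarrow> real) \<Rightarrow> bool" where
  "H1 h Rm j \<longleftrightarrow> condS h (Uset h Rm) j \<and> sLb h (Uplus h) j \<and> (\<forall>\<phi>\<in>Uplus h. j \<phi> \<ge> 0)
     \<and> (\<forall>B1 B2. (\<forall>a\<in>B1. \<forall>b\<in>B2. pairf a b \<in> Uplus h) \<and> (\<exists>M. \<forall>a\<in>B1. nrm1 h a \<le> M)
          \<longrightarrow> bounded {j (pairf a b) | a b. a \<in> B1 \<and> b \<in> B2})"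

definition H2 :: "real \<Rightarrow> (real \<Rightarrow> real) \<Rightarrow> bool" where
  "H2 Rm q \<longleftrightarrow> bounded (q ` {Rm<..}) \<and>
     (\<exists>q'. (\<forall>x\<in>{Rm<..}. (q has_real_derivative q' x) (at x)) \<and> continuous_on {Rm<..} q')"

definition Fmap :: "(real \<Rightarrow> real) \<Rightarrow> ((real \<Rightarrow> real \<times> real) \<Rightarrow> real) \<Rightarrow> real \<Rightarrow> (real \<Rightarrow> real \<times> real) \<Rightarrow> real \<times> real" where
  "Fmap q j \<mu> \<phi> = (q (snd (\<phi> 0)) * fst (\<phi> 0), j \<phi> - \<mu> * snd (\<phi> 0))"

definition Xset :: "real \<Rightarrow> real \<Rightarrow> (real \<Rightarrow> real) \<Rightarrow> ((real \<Rightarrow> real \<times> real) \<Rightarrow> real) \<Rightarrow> real \<Rightarrow> (real \<Rightarrow> real \<times> real) set" where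
  "Xset h Rm q j \<mu> = {\<phi>\<in>Uset h Rm. dseg h \<phi> 0 = Fmap q j \<mu> \<phi>}"

definition Xplus :: "real \<Rightarrow> real \<Rightarrow> (real \<Rightarrow> real) \<Rightarrow> ((real \<Rightarrow> real \<times> real) \<Rightarrow> real) \<Rightarrow> real \<Rightarrow> (real \<Rightarrow> real \<times> real) set" where
  "Xplus h Rm q j \<mu> = Xset h Rm q j \<mu> \<inter> Uplus h"

definition seg :: "real \<Rightarrow> (real \<Rightarrow> real \<times> real) \<Rightarrow> real \<Rightarrow> real \<Rightarrow> real \<times> real" where
  "seg h x t = (\<lambda>s. if s \<in> {-h..0} then x (t + s) else 0)"

definition is_solution :: "real \<Rightarrow> real \<Rightarrow> (real \<Rightarrow> real) \<Rightarrow> ((real \<Rightarrow> real \<times> real) \<Rightarrow> real) \<Rightarrow> real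
      \<Rightarrow> (real \<Rightarrow> real \<times> real) \<Rightarrow> (real \<Rightarrow> real \<times> real) \<Rightarrow> bool" where
  "is_solution h Rm q j \<mu> \<phi> x \<longleftrightarrow>
     (\<exists>x'. (\<forall>t\<in>{-h..}. (x has_vector_derivative x' t) (at t within {-h..})) \<and> continuous_on {-h..} x')
   \<and> seg h x 0 = \<phi>
   \<and> (\<forall>t\<ge>0. seg h x t \<in> Uset h Rm)
   \<and> (\<forall>t>0. (x has_vector_derivative
          (q (snd (x t)) * fst (x t), j (seg h x t) - \<mu> * snd (x t))) (at t))"

end

theory Submission
  imports Defs
begin

text \<open>The first equation of the cell FDE is linear in \<open>w\<close>, so
  \<open>w t = w 0 * exp (\<integral>\<^sub>0\<^sup>t q (v s) ds)\<close>. If \<open>v t \<rightarrow> 0\<close> then \<open>q (v t) \<rightarrow> q 0 > 0\<close>, so the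
  integral grows at least linearly and \<open>w\<close> grows exponentially.\<close>

lemma filterlim_integral_at_top:
  fixes a :: "real \<Rightarrow> real"
  assumes a: "continuous_on {t0..} a" and lim: "(a \<longlongrightarrow> L) at_top" and "L > 0"
  shows "filterlim (\<lambda>t. integral {t0..t} a) at_top at_top"
proof -
  have "eventually (\<lambda>t. a t > L / 2) at_top"
    using lim \<open>L > 0\<close> by (intro order_tendstoD) auto
  then obtain T0 where aT0: "\<And>t. t \<ge> T0 \<Longrightarrow> a t > L / 2"
    unfolding eventually_at_top_linorder by blast
  define T where "T = max T0 t0"
  have T: "T \<ge> t0" and aT: "\<And>t. t \<ge> T \<Longrightarrow> a t \<ge> L / 2"
    using aT0 by (auto simp: T_def less_imp_le)
  have integrable: "a integrable_on {t0..t}" for t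
    by (intro integrable_continuous_interval continuous_on_subset[OF a]) auto
  have lower: "integral {t0..T} a + L / 2 * (t - T) \<le> integral {t0..t} a" if "t \<ge> T" for t
  proof -
    have "integral {T..t} (\<lambda>_. L / 2) \<le> integral {T..t} a"
      using aT by (intro integral_le integrable_continuous_interval continuous_on_subset[OF a])
        (use T in auto)
    moreover have "integral {t0..t} a = integral {t0..T} a + integral {T..t} a"
      using Henstock_Kurzweil_Integration.integral_combine[OF T that integrable] by simp
    ultimately show ?thesis
      using that by (simp add: mult.commute)
  qed
  have "filterlim (\<lambda>t. C + L / 2 * (t - T)) at_top at_top" for C
    using \<open>L > 0\<close> by real_asymp
  moreover have "eventually (\<lambda>t. integral {t0..T} a + L / 2 * (t - T) \<le> integral {t0..t} a) at_top"
    using eventually_ge_at_top[of T] by (rule eventually_mono) (rule lower)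
  ultimately show ?thesis
    by (rule filterlim_at_top_mono)
qed

lemma linear_ode_eq_exp_integral:
  fixes w a :: "real \<Rightarrow> real"
  assumes a: "continuous_on {t0..} a" and w: "continuous_on {t0..} w"
    and w': "\<And>t. t > t0 \<Longrightarrow> (w has_real_derivative a t * w t) (at t)"
    and "t \<ge> t0"
  shows "w t = w t0 * exp (integral {t0..t} a)"
proof (cases "t = t0")
  case False
  define I where "I s = integral {t0..s} a" for s
  define y where "y s = w s * exp (- I s)" for s
  have I': "(I has_real_derivative a s) (at s)" if "s > t0" for s
  proof -
    have "(I has_real_derivative a s) (at s within {t0..s+1})"
      unfolding I_def using that
      by (intro integral_has_real_derivative continuous_on_subset[OF a]) auto
    moreover have "s \<in> interior {t0..s+1}"
      using that by simp
    ultimately show ?thesis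
      by (metis at_within_interior)
  qed
  have "y t = y t0"
  proof (rule DERIV_isconst_end[where f = y])
    show "t0 < t"
      using \<open>t \<ge> t0\<close> False by simp
    have "continuous_on {t0..t} I"
      unfolding I_def
      by (intro indefinite_integral_continuous_1 integrable_continuous_interval
          continuous_on_subset[OF a]) auto
    then show "continuous_on {t0..t} y"
      unfolding y_def by (intro continuous_intros continuous_on_subset[OF w]) auto
    fix s assume "t0 < s" "s < t"
    have "(y has_real_derivative a s * w s * exp (- I s) + w s * (exp (- I s) * - a s)) (at s)"
      unfolding y_def using w'[OF \<open>t0 < s\<close>] I'[OF \<open>t0 < s\<close>]
      by (auto intro!: derivative_eq_intros)
    then show "(y has_real_derivative 0) (at s)"
      by (simp add: algebra_simps)
  qed
  then show ?thesis
    by (simp add: y_def I_def exp_minus field_simps)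
qed simp

lemma linear_ode_filterlim_at_top:
  fixes w a :: "real \<Rightarrow> real"
  assumes a: "continuous_on {t0..} a" and w: "continuous_on {t0..} w"
    and w': "\<And>t. t > t0 \<Longrightarrow> (w has_real_derivative a t * w t) (at t)"
    and "(a \<longlongrightarrow> L) at_top" and "L > 0" and "w t0 > 0"
  shows "filterlim w at_top at_top"
proof -
  have "filterlim (\<lambda>t. exp (integral {t0..t} a)) at_top at_top"
    using exp_at_top filterlim_integral_at_top[OF a \<open>(a \<longlongrightarrow> L) at_top\<close> \<open>L > 0\<close>]
    by (rule filterlim_compose)
  then have "filterlim (\<lambda>t. w t0 * exp (integral {t0..t} a)) at_top at_top"
    by (rule filterlim_tendsto_pos_mult_at_top[OF tendsto_const \<open>w t0 > 0\<close>])
  moreover have "eventually (\<lambda>t. w t0 * exp (integral {t0..t} a) \<le> w t) at_top"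
    using eventually_ge_at_top[of t0]
    by (rule eventually_mono) (simp add: linear_ode_eq_exp_integral[OF a w w', symmetric])
  ultimately show ?thesis
    by (rule filterlim_at_top_mono)
qed

lemma H2_continuous_on:
  assumes "H2 Rm q"
  shows "continuous_on {Rm<..} q"
proof -
  obtain q' where "\<forall>y\<in>{Rm<..}. (q has_real_derivative q' y) (at y)"
    using assms unfolding H2_def by blast
  then show ?thesis
    by (blast intro: continuous_at_imp_continuous_on DERIV_isCont)
qed

lemma is_solution_continuous_on:
  assumes "is_solution h Rm q j \<mu> \<phi> x"
  shows "continuous_on {-h..} x"
proof -
  obtain x' where "\<forall>t\<in>{-h..}. (x has_vector_derivative x' t) (at t within {-h..})"
    using assms unfolding is_solution_def by blast
  then show ?thesis
    using has_vector_derivative_continuous continuous_on_eq_continuous_within by blast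
qed

lemma is_solution_initial_value:
  assumes "h \<ge> 0" and "is_solution h Rm q j \<mu> \<phi> x"
  shows "x 0 = \<phi> 0"
proof -
  have "seg h x 0 = \<phi>"
    using assms(2) unfolding is_solution_def by blast
  then have "seg h x 0 0 = \<phi> 0"
    by simp
  then show ?thesis
    using \<open>h \<ge> 0\<close> by (simp add: seg_def)
qed

lemma is_solution_snd_gt:
  assumes "h \<ge> 0" and "is_solution h Rm q j \<mu> \<phi> x" and "t \<ge> 0"
  shows "snd (x t) > Rm"
proof -
  have "seg h x t \<in> Uset h Rm"
    using assms(2,3) unfolding is_solution_def by blast
  then have "snd (seg h x t 0) > Rm"
    using \<open>h \<ge> 0\<close> unfolding Uset_def by auto
  then show ?thesis
    using \<open>h \<ge> 0\<close> by (simp add: seg_def)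
qed

lemma is_solution_fst_deriv:
  assumes "is_solution h Rm q j \<mu> \<phi> x" and "t > 0"
  shows "((\<lambda>s. fst (x s)) has_real_derivative q (snd (x t)) * fst (x t)) (at t)"
proof -
  have "(x has_vector_derivative (q (snd (x t)) * fst (x t), j (seg h x t) - \<mu> * snd (x t))) (at t)"
    using assms unfolding is_solution_def by blast
  then have "((\<lambda>s. fst (x s)) has_derivative
      (\<lambda>d. fst (d *\<^sub>R (q (snd (x t)) * fst (x t), j (seg h x t) - \<mu> * snd (x t))))) (at t)"
    unfolding has_vector_derivative_def by (rule has_derivative_fst)
  then show ?thesis
    by (simp add: has_real_derivative_iff_has_vector_derivative has_vector_derivative_def)
qed

lemma is_solution_fst_filterlim_at_top:
  assumes "h \<ge> 0" and "Rm < 0" and "H2 Rm q" and "q 0 > 0"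
    and sol: "is_solution h Rm q j \<mu> \<phi> x" and "fst (\<phi> 0) > 0"
    and v: "((\<lambda>t. snd (x t)) \<longlongrightarrow> 0) at_top"
  shows "filterlim (\<lambda>t. fst (x t)) at_top at_top"
proof (rule linear_ode_filterlim_at_top[of 0 "\<lambda>t. q (snd (x t))"])
  have q: "continuous_on {Rm<..} q"
    using \<open>H2 Rm q\<close> by (rule H2_continuous_on)
  have x_cont: "continuous_on {0..} x"
    by (rule continuous_on_subset[OF is_solution_continuous_on[OF sol]]) (use \<open>h \<ge> 0\<close> in auto)
  then show "continuous_on {0..} (\<lambda>t. fst (x t))"
    by (intro continuous_intros)
  show "continuous_on {0..} (\<lambda>t. q (snd (x t)))"
    using is_solution_snd_gt[OF \<open>h \<ge> 0\<close> sol]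
    by (intro continuous_on_compose2[OF q] continuous_intros x_cont) auto
  show "((\<lambda>s. fst (x s)) has_real_derivative q (snd (x t)) * fst (x t)) (at t)" if "t > 0" for t
    using sol that by (rule is_solution_fst_deriv)
  show "((\<lambda>t. q (snd (x t))) \<longlongrightarrow> q 0) at_top"
    using q \<open>Rm < 0\<close> by (intro isCont_tendsto_compose[OF _ v]) (simp add: continuous_on_eq_continuous_at)
  show "fst (x 0) > 0"
    using is_solution_initial_value[OF \<open>h \<ge> 0\<close> sol] \<open>fst (\<phi> 0) > 0\<close> by simp
qed fact

theorem lemma17:
  fixes h Rm \<mu> :: real and q :: "real \<Rightarrow> real" and j :: "(real \<Rightarrow> real \<times> real) \<Rightarrow> real"
    and \<phi> x :: "real \<Rightarrow> real \<times> real"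
  assumes "h > 0" and "Rm < 0" and "\<mu> \<ge> 0"
    and "H1 h Rm j" and "H2 Rm q" and "Xplus h Rm q j \<mu> \<noteq> {}"
    and "q 0 > 0"
    and "\<phi> \<in> Xplus h Rm q j \<mu>" and "fst (\<phi> 0) > 0"
    and "is_solution h Rm q j \<mu> \<phi> x"
  shows "(((\<lambda>t. snd (x t)) \<longlongrightarrow> 0) at_top \<longrightarrow> filterlim (\<lambda>t. fst (x t)) at_top at_top)
       \<and> \<not> ((x \<longlongrightarrow> (0, 0)) at_top)"
proof (intro conjI impI notI)
  note growth = is_solution_fst_filterlim_at_top[OF less_imp_le[OF \<open>h > 0\<close>] assms(2,5,7,10,9)]
  show "filterlim (\<lambda>t. fst (x t)) at_top at_top" if "((\<lambda>t. snd (x t)) \<longlongrightarrow> 0) at_top"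
    using growth[OF that] .
  assume "(x \<longlongrightarrow> (0, 0)) at_top"
  then have w: "((\<lambda>t. fst (x t)) \<longlongrightarrow> 0) at_top" and v: "((\<lambda>t. snd (x t)) \<longlongrightarrow> 0) at_top"
    by (auto dest: tendsto_fst tendsto_snd)
  from growth[OF v] have "filterlim (\<lambda>t. fst (x t)) at_infinity at_top"
    by (rule filterlim_at_top_imp_at_infinity)
  with w show False
    using not_tendsto_and_filterlim_at_infinity trivial_limit_at_top_linorder by blast
qed

end
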